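(* Let $\alpha\in(1,\infty)$, let $p_X$ be a distribution on a finite set $\mathcal X$ and $p_{Y\mid X}$ a channel to a finite set $\mathcal Y$. Let $\tilde q^{(0)}_{Y\mid X}$ be an initial channel and, for $k\ge0$, define $$r^{(k)}_{X\mid Y}(x\mid y)=\frac{p_X(x)\tilde q^{(k)}_{Y\mid X}(y\mid x)}{\sum_{x'}p_X(x')\tilde q^{(k)}_{Y\mid X}(y\mid x')},\qquad \tilde q^{(k+1)}_{Y\mid X}(y\mid x)=\frac{p_{Y\mid X}(y\mid x)r^{(k)}_{X\mid Y}(x\mid y)^{1-1/\alpha}}{\sum_{y'}p_{Y\mid X}(y'\mid x)r^{(k)}_{X\mid Y}(x\mid y')^{1-1/\alpha}}.$$ Then $$\tilde F_\alpha^{\mathrm C}(\tilde q^{(0)}_{Y\mid X},r^{(0)}_{X\mid Y})\le\tilde F_\alpha^{\mathrm C}(\tilde q^{(1)}_{Y\mid X},r^{(0)}_{X\mid Y})\le\cdots\le\tilde F_\alpha^{\mathrm C}(\tilde q^{(k)}_{Y\mid X},r^{(k)}_{X\mid Y})\le\tilde F_\alpha^{\mathrm C}(\tilde q^{(k+1)}_{Y\mid X},r^{(k)}_{X\mid Y})\le\cdots\le I_\alpha^{\mathrm C}(X;Y).$$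
   Context: $\log$ is natural, $D$ is the Kullback–Leibler divergence, and $D_\alpha(p\|q):=\frac{1}{\alpha-1}\log\sum_zp(z)^\alpha q(z)^{1-\alpha}$ is the Rényi divergence. The Augustin–Csiszár mutual information is $I_\alpha^{\mathrm C}(X;Y):=\min_{q_Y}\sum_xp_X(x)D_\alpha(p_{Y\mid X}(\cdot\mid x)\|q_Y)$. For a channel $\tilde q_{Y\mid X}$ and a reverse channel $r_{X\mid Y}$ (a family of distributions $r_{X\mid Y}(\cdot\mid y)$ on $\mathcal X$), $\tilde F_\alpha^{\mathrm C}(\tilde q_{Y\mid X},r_{X\mid Y}):=\frac{\alpha}{1-\alpha}D(p_X\tilde q_{Y\mid X}\|p_Xp_{Y\mid X})+\mathbb E^{p_X\tilde q_{Y\mid X}}[\log\frac{r_{X\mid Y}(X\mid Y)}{p_X(X)}]$. *)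

theory Defs
  imports "HOL-Analysis.Analysis" "HOL-Library.Extended_Real"
begin

text \<open>A channel q :: 'a \<Rightarrow> 'b \<Rightarrow> real is read as q x y = q(y|x).
  A reverse channel r :: 'a \<Rightarrow> 'b \<Rightarrow> real is read as r x y = r(x|y).
  Information quantities take values in ereal, so that infinite divergences are
  represented faithfully (conventions 0 log 0 = 0, p log(p/0) = +infinity for p > 0).\<close>

definition is_dist :: "('c::finite \<Rightarrow> real) \<Rightarrow> bool" where
  "is_dist p \<longleftrightarrow> (\<forall>z. 0 \<le> p z) \<and> (\<Sum>z\<in>UNIV. p z) = 1"

definition is_channel :: "('a::finite \<Rightarrow> 'b::finite \<Rightarrow> real) \<Rightarrow> bool" where
  "is_channel W \<longleftrightarrow> (\<forall>x. is_dist (W x))"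

definition KL :: "('c::finite \<Rightarrow> real) \<Rightarrow> ('c \<Rightarrow> real) \<Rightarrow> ereal" where
  "KL P Q = (if \<exists>z. 0 < P z \<and> Q z = 0 then \<infinity>
             else ereal (\<Sum>z\<in>{z. 0 < P z}. P z * ln (P z / Q z)))"

definition renyi_div :: "real \<Rightarrow> ('c::finite \<Rightarrow> real) \<Rightarrow> ('c \<Rightarrow> real) \<Rightarrow> ereal" where
  "renyi_div \<alpha> p q = (if \<exists>z. 0 < p z \<and> q z = 0 then \<infinity>
     else ereal (1 / (\<alpha> - 1) * ln (\<Sum>z\<in>{z. 0 < p z}. p z powr \<alpha> * q z powr (1 - \<alpha>))))"

definition augustin_csiszar_MI ::
    "real \<Rightarrow> ('a::finite \<Rightarrow> real) \<Rightarrow> ('a \<Rightarrow> 'b::finite \<Rightarrow> real) \<Rightarrow> ereal" where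
  "augustin_csiszar_MI \<alpha> pX W =
     (INF qY\<in>{qY. is_dist qY}. (\<Sum>x\<in>UNIV. ereal (pX x) * renyi_div \<alpha> (W x) qY))"

definition exp_log_ratio ::
    "('a::finite \<Rightarrow> real) \<Rightarrow> ('a \<Rightarrow> 'b::finite \<Rightarrow> real) \<Rightarrow> ('a \<Rightarrow> 'b \<Rightarrow> real) \<Rightarrow> ereal" where
  "exp_log_ratio pX q r =
     (if \<exists>x y. 0 < pX x * q x y \<and> r x y = 0 then -\<infinity>
      else ereal (\<Sum>(x,y)\<in>{(x,y). 0 < pX x * q x y}. pX x * q x y * ln (r x y / pX x)))"

definition F_C ::
    "real \<Rightarrow> ('a::finite \<Rightarrow> real) \<Rightarrow> ('a \<Rightarrow> 'b::finite \<Rightarrow> real)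
     \<Rightarrow> ('a \<Rightarrow> 'b \<Rightarrow> real) \<Rightarrow> ('a \<Rightarrow> 'b \<Rightarrow> real) \<Rightarrow> ereal" where
  "F_C \<alpha> pX W q r =
     ereal (\<alpha> / (1 - \<alpha>)) * KL (\<lambda>(x,y). pX x * q x y) (\<lambda>(x,y). pX x * W x y)
     + exp_log_ratio pX q r"

definition rev_update ::
    "('a::finite \<Rightarrow> real) \<Rightarrow> ('a \<Rightarrow> 'b \<Rightarrow> real) \<Rightarrow> ('a \<Rightarrow> 'b \<Rightarrow> real)" where
  "rev_update pX q = (\<lambda>x y. pX x * q x y / (\<Sum>x'\<in>UNIV. pX x' * q x' y))"

definition ch_update ::
    "real \<Rightarrow> ('a \<Rightarrow> 'b::finite \<Rightarrow> real) \<Rightarrow> ('a \<Rightarrow> 'b \<Rightarrow> real) \<Rightarrow> ('a \<Rightarrow> 'b \<Rightarrow> real)" where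
  "ch_update \<alpha> W r = (\<lambda>x y. W x y * r x y powr (1 - 1 / \<alpha>)
                             / (\<Sum>y'\<in>UNIV. W x y' * r x y' powr (1 - 1 / \<alpha>)))"

primrec q_iter ::
    "real \<Rightarrow> ('a::finite \<Rightarrow> real) \<Rightarrow> ('a \<Rightarrow> 'b::finite \<Rightarrow> real) \<Rightarrow> ('a \<Rightarrow> 'b \<Rightarrow> real)
     \<Rightarrow> nat \<Rightarrow> ('a \<Rightarrow> 'b \<Rightarrow> real)" where
  "q_iter \<alpha> pX W q0 0 = q0"
| "q_iter \<alpha> pX W q0 (Suc k) = ch_update \<alpha> W (rev_update pX (q_iter \<alpha> pX W q0 k))"

definition r_iter ::
    "real \<Rightarrow> ('a::finite \<Rightarrow> real) \<Rightarrow> ('a \<Rightarrow> 'b::finite \<Rightarrow> real) \<Rightarrow> ('a \<Rightarrow> 'b \<Rightarrow> real)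
     \<Rightarrow> nat \<Rightarrow> ('a \<Rightarrow> 'b \<Rightarrow> real)" where
  "r_iter \<alpha> pX W q0 k = rev_update pX (q_iter \<alpha> pX W q0 k)"

end

theory Submission
  imports Defs
begin

(* Every inequality is an instance of Gibbs' inequality: for a probability vector s and positive
   weights a, sum s ln (a / s) <= ln (sum a).  Where F is finite it is a sum over the support of
   the joint distribution pX q.  For fixed q and any output distribution g, replacing r by the
   Bayes reverse channel pX q / g changes F by sum pX q ln (r g / (pX q)) <= 0, because r g has
   total mass at most 1; with g = pY this is the r-step.  For fixed r, F splits into one term
   per input x, whose summand equals alpha/(alpha-1) ln (W r^(1-1/alpha) / q) - ln pX, so the
   term is maximised by the tilted channel q proportional to W r^(1-1/alpha): this is the q-step.
   For the bound by I_alpha^C take g = qY arbitrary: the summand becomes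
   1/(alpha-1) ln (W^alpha qY^(1-alpha) / q), and Gibbs bounds the term of x by
   D_alpha(W(.|x) || qY). *)

lemma gibbs_inequality:
  fixes s a :: "'c \<Rightarrow> real"
  assumes "finite S" and s_pos: "\<And>z. z \<in> S \<Longrightarrow> 0 < s z"
    and a_pos: "\<And>z. z \<in> S \<Longrightarrow> 0 < a z"
    and "sum s S = 1" and "sum a S \<le> A"
  shows "(\<Sum>z\<in>S. s z * ln (a z / s z)) \<le> ln A"
proof -
  have "S \<noteq> {}" using \<open>sum s S = 1\<close> by auto
  hence "0 < sum a S" using \<open>finite S\<close> a_pos by (simp add: sum_pos)
  hence A_pos: "0 < A" using \<open>sum a S \<le> A\<close> by linarith
  have "s z * ln (a z / s z) \<le> a z / A - s z + s z * ln A" if "z \<in> S" for z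
  proof -
    have sz: "0 < s z" and az: "0 < a z" using that s_pos a_pos by auto
    have "ln (a z / (s z * A)) \<le> a z / (s z * A) - 1"
      using sz az A_pos by (intro ln_le_minus_one) simp
    moreover have "ln (a z / s z) = ln (a z / (s z * A)) + ln A"
      using sz az A_pos by (simp add: ln_div ln_mult)
    ultimately have "s z * ln (a z / s z) \<le> s z * (a z / (s z * A) - 1 + ln A)"
      using sz by (simp add: mult_left_mono)
    also have "\<dots> = a z / A - s z + s z * ln A" using sz A_pos by (simp add: field_simps)
    finally show ?thesis .
  qed
  hence "(\<Sum>z\<in>S. s z * ln (a z / s z)) \<le> (\<Sum>z\<in>S. a z / A - s z + s z * ln A)"
    by (rule sum_mono)
  also have "\<dots> = sum a S / A - 1 + ln A"
    using \<open>sum s S = 1\<close>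
    by (simp add: sum.distrib sum_subtractf sum_divide_distrib flip: sum_distrib_right)
  also have "\<dots> \<le> ln A" using \<open>sum a S \<le> A\<close> A_pos by (simp add: divide_le_eq_1)
  finally show ?thesis .
qed

lemma ln_tilted_eq:
  fixes \<alpha> q w r :: real
  assumes "\<alpha> \<noteq> 0" "\<alpha> \<noteq> 1" "0 < q" "0 < w" "0 < r"
  shows "\<alpha> / (\<alpha> - 1) * ln (w * r powr (1 - 1 / \<alpha>) / q) = \<alpha> / (1 - \<alpha>) * ln (q / w) + ln r"
  using assms by (simp add: ln_mult ln_div ln_powr field_simps)

lemma ln_renyi_eq:
  fixes \<alpha> q w t :: real
  assumes "\<alpha> \<noteq> 1" "0 < q" "0 < w" "0 < t"
  shows "1 / (\<alpha> - 1) * ln (w powr \<alpha> * t powr (1 - \<alpha>) / q) = \<alpha> / (1 - \<alpha>) * ln (q / w) + ln (q / t)"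
  using assms by (simp add: ln_mult ln_div ln_powr field_simps)

lemma sum_over_support:
  fixes q :: "'c::finite \<Rightarrow> real"
  assumes "\<And>y. 0 \<le> q y"
  shows "sum q {y. 0 < q y} = sum q UNIV"
  by (rule sum.mono_neutral_left) (use assms in \<open>auto simp: less_eq_real_def\<close>)

(* Rows outside the support of pX need not be stochastic: there ch_update may produce a zero row. *)
definition channel_on :: "('a::finite \<Rightarrow> real) \<Rightarrow> ('a \<Rightarrow> 'b::finite \<Rightarrow> real) \<Rightarrow> bool" where
  "channel_on pX q \<longleftrightarrow> (\<forall>x y. 0 \<le> q x y) \<and> (\<forall>x. 0 < pX x \<longrightarrow> sum (q x) UNIV = 1)"

(* rev_update is only sub-stochastic: at an output y of probability 0 the division by zero
   makes r(.|y) vanish. *)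
definition sub_reverse_channel :: "('a::finite \<Rightarrow> 'b \<Rightarrow> real) \<Rightarrow> bool" where
  "sub_reverse_channel r \<longleftrightarrow> (\<forall>x y. 0 \<le> r x y) \<and> (\<forall>y. (\<Sum>x\<in>UNIV. r x y) \<le> 1)"

definition overlaps ::
    "('a \<Rightarrow> real) \<Rightarrow> ('a \<Rightarrow> 'b \<Rightarrow> real) \<Rightarrow> ('a \<Rightarrow> 'b \<Rightarrow> real) \<Rightarrow> bool" where
  "overlaps pX W q \<longleftrightarrow> (\<forall>x. 0 < pX x \<longrightarrow> (\<exists>y. 0 < W x y \<and> 0 < q x y))"

definition joint_support :: "('a \<Rightarrow> real) \<Rightarrow> ('a \<Rightarrow> 'b \<Rightarrow> real) \<Rightarrow> ('a \<times> 'b) set" where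
  "joint_support pX q = {(x, y). 0 < pX x * q x y}"

definition output_dist :: "('a::finite \<Rightarrow> real) \<Rightarrow> ('a \<Rightarrow> 'b \<Rightarrow> real) \<Rightarrow> 'b \<Rightarrow> real" where
  "output_dist pX q y = (\<Sum>x\<in>UNIV. pX x * q x y)"

definition F_sum ::
    "real \<Rightarrow> ('a::finite \<Rightarrow> real) \<Rightarrow> ('a \<Rightarrow> 'b::finite \<Rightarrow> real)
     \<Rightarrow> ('a \<Rightarrow> 'b \<Rightarrow> real) \<Rightarrow> ('a \<Rightarrow> 'b \<Rightarrow> real) \<Rightarrow> real" where
  "F_sum \<alpha> pX W q r = (\<Sum>(x, y)\<in>joint_support pX q.
     pX x * q x y * (\<alpha> / (1 - \<alpha>) * ln (q x y / W x y) + ln (r x y / pX x)))"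

definition F_input ::
    "real \<Rightarrow> real \<Rightarrow> ('b::finite \<Rightarrow> real) \<Rightarrow> ('b \<Rightarrow> real) \<Rightarrow> ('b \<Rightarrow> real) \<Rightarrow> real" where
  "F_input \<alpha> p w q r = (\<Sum>y\<in>{y. 0 < q y}. q y * (\<alpha> / (1 - \<alpha>) * ln (q y / w y) + ln (r y / p)))"

lemma is_dist_nonneg: "is_dist p \<Longrightarrow> 0 \<le> p z"
  by (simp add: is_dist_def)

lemma is_channel_nonneg: "is_channel W \<Longrightarrow> 0 \<le> W x y"
  by (simp add: is_channel_def is_dist_def)

lemma channel_on_nonneg: "channel_on pX q \<Longrightarrow> 0 \<le> q x y"
  by (simp add: channel_on_def)

lemma channel_on_sum: "channel_on pX q \<Longrightarrow> 0 < pX x \<Longrightarrow> sum (q x) UNIV = 1"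
  by (simp add: channel_on_def)

lemma sub_reverse_channel_nonneg: "sub_reverse_channel r \<Longrightarrow> 0 \<le> r x y"
  by (simp add: sub_reverse_channel_def)

lemma mem_joint_support:
  assumes "\<And>x. 0 \<le> pX x" and "\<And>x y. 0 \<le> q x y"
  shows "(x, y) \<in> joint_support pX q \<longleftrightarrow> 0 < pX x \<and> 0 < q x y"
  using assms[of x] assms(2)[of x y]
  by (auto simp: joint_support_def zero_less_mult_iff)

lemma sum_joint_support:
  fixes pX :: "'a::finite \<Rightarrow> real" and q :: "'a \<Rightarrow> 'b::finite \<Rightarrow> real"
  assumes "\<And>x. 0 \<le> pX x" and "\<And>x y. 0 \<le> q x y"
  shows "(\<Sum>(x, y)\<in>joint_support pX q. pX x * q x y * f x y)
       = (\<Sum>x\<in>{x. 0 < pX x}. pX x * (\<Sum>y\<in>{y. 0 < q x y}. q x y * f x y))"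
proof -
  have "joint_support pX q = Sigma {x. 0 < pX x} (\<lambda>x. {y. 0 < q x y})"
    by (auto simp: mem_joint_support assms)
  thus ?thesis
    by (simp only:) (subst sum.Sigma[symmetric], auto simp: sum_distrib_left mult.assoc)
qed

lemma F_sum_by_input:
  assumes "\<And>x. 0 \<le> pX x" and "\<And>x y. 0 \<le> q x y"
  shows "F_sum \<alpha> pX W q r = (\<Sum>x\<in>{x. 0 < pX x}. pX x * F_input \<alpha> (pX x) (W x) (q x) (r x))"
  unfolding F_sum_def F_input_def using sum_joint_support[OF assms] by simp

lemma joint_mass:
  assumes "is_dist pX" and "channel_on pX q"
  shows "(\<Sum>(x, y)\<in>joint_support pX q. pX x * q x y) = 1"
proof -
  note pX = is_dist_nonneg[OF assms(1)]
  note q = channel_on_nonneg[OF assms(2)] and q_sum = channel_on_sum[OF assms(2)]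
  have "(\<Sum>(x, y)\<in>joint_support pX q. pX x * q x y) = (\<Sum>x\<in>{x. 0 < pX x}. pX x)"
    using sum_joint_support[of pX q "\<lambda>_ _. 1"] by (simp add: sum_over_support pX q q_sum)
  also have "\<dots> = 1" using assms(1) by (simp add: sum_over_support pX is_dist_def)
  finally show ?thesis .
qed

lemma output_dist_is_dist:
  assumes "is_dist pX" and "channel_on pX q"
  shows "is_dist (output_dist pX q)"
proof -
  note pX = is_dist_nonneg[OF assms(1)]
  note q = channel_on_nonneg[OF assms(2)] and q_sum = channel_on_sum[OF assms(2)]
  have "(\<Sum>y\<in>UNIV. output_dist pX q y) = (\<Sum>x\<in>UNIV. pX x * sum (q x) UNIV)"
    unfolding output_dist_def by (subst sum.swap) (simp add: sum_distrib_left)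
  also have "\<dots> = (\<Sum>x\<in>UNIV. pX x)"
    by (rule sum.cong) (use pX q_sum in \<open>auto simp: less_eq_real_def\<close>)
  finally show ?thesis
    using assms(1) pX q by (simp add: is_dist_def output_dist_def sum_nonneg)
qed

lemma sum_reverse_times_dist_le_1:
  fixes r :: "'a::finite \<Rightarrow> 'b::finite \<Rightarrow> real"
  assumes "sub_reverse_channel r" and "is_dist g"
  shows "(\<Sum>(x, y)\<in>S. r x y * g y) \<le> 1"
proof -
  have r: "0 \<le> r x y" "(\<Sum>x\<in>UNIV. r x y) \<le> 1" for x y
    using assms(1) by (auto simp: sub_reverse_channel_def)
  have g: "0 \<le> g y" "sum g UNIV = 1" for y
    using assms(2) by (auto simp: is_dist_def)
  have "(\<Sum>(x, y)\<in>S. r x y * g y) \<le> (\<Sum>(x, y)\<in>UNIV. r x y * g y)"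
    by (rule sum_mono2) (use r g in auto)
  also have "\<dots> = (\<Sum>y\<in>UNIV. g y * (\<Sum>x\<in>UNIV. r x y))"
    by (simp add: sum.cartesian_product' flip: UNIV_Times_UNIV)
       (subst sum.swap, simp add: sum_distrib_left mult.commute)
  also have "\<dots> \<le> (\<Sum>y\<in>UNIV. g y)"
    by (rule sum_mono) (use r g mult_left_mono[of _ 1] in fastforce)
  finally show ?thesis using g by simp
qed

lemma F_C_eq_F_sum:
  assumes "\<And>x. 0 \<le> pX x" and "\<And>x y. 0 \<le> q x y"
    and pos: "\<And>x y. (x, y) \<in> joint_support pX q \<Longrightarrow> 0 < W x y \<and> 0 < r x y"
  shows "F_C \<alpha> pX W q r = ereal (F_sum \<alpha> pX W q r)"
proof -
  have supp: "{z. 0 < (\<lambda>(x, y). pX x * q x y) z} = joint_support pX q"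
    by (auto simp: joint_support_def)
  have "pX x * W x y \<noteq> 0" if "(x, y) \<in> joint_support pX q" for x y
  proof -
    have "0 < pX x" using that by (simp add: mem_joint_support assms)
    thus ?thesis using pos[OF that] by simp
  qed
  hence "\<not> (\<exists>z. 0 < (\<lambda>(x, y). pX x * q x y) z \<and> (\<lambda>(x, y). pX x * W x y) z = 0)"
    by (auto simp: joint_support_def)
  hence KL: "KL (\<lambda>(x, y). pX x * q x y) (\<lambda>(x, y). pX x * W x y)
      = ereal (\<Sum>(x, y)\<in>joint_support pX q. pX x * q x y * ln (q x y / W x y))"
    unfolding KL_def supp
    by (simp only: if_False) (intro arg_cong[where f = ereal] sum.cong, auto)
  have "\<not> (\<exists>x y. 0 < pX x * q x y \<and> r x y = 0)"
    using pos by (force simp: joint_support_def)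
  hence E: "exp_log_ratio pX q r
      = ereal (\<Sum>(x, y)\<in>joint_support pX q. pX x * q x y * ln (r x y / pX x))"
    by (simp add: exp_log_ratio_def joint_support_def)
  show ?thesis
    unfolding F_C_def KL E F_sum_def
    by (simp add: sum_distrib_left sum.distrib[symmetric] case_prod_beta algebra_simps)
qed

lemma F_C_eq_MInfty:
  assumes "1 < \<alpha>" and "(x, y) \<in> joint_support pX q" and "W x y = 0 \<or> r x y = 0"
  shows "F_C \<alpha> pX W q r = -\<infinity>"
proof -
  define K where "K = KL (\<lambda>(x, y). pX x * q x y) (\<lambda>(x, y). pX x * W x y)"
  define E where "E = exp_log_ratio pX q r"
  have neg: "\<alpha> / (1 - \<alpha>) < 0" using assms(1) by (simp add: divide_pos_neg)
  have "K \<noteq> -\<infinity>" by (simp add: K_def KL_def)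
  hence K_term: "ereal (\<alpha> / (1 - \<alpha>)) * K \<noteq> \<infinity>" using neg by (cases K) auto
  have "E \<noteq> \<infinity>" by (simp add: E_def exp_log_ratio_def)
  have F: "F_C \<alpha> pX W q r = ereal (\<alpha> / (1 - \<alpha>)) * K + E" by (simp add: F_C_def K_def E_def)
  show ?thesis
  proof (cases "W x y = 0")
    case True
    hence "K = \<infinity>" using assms(2) by (auto simp: K_def KL_def joint_support_def)
    thus ?thesis using neg \<open>E \<noteq> \<infinity>\<close> unfolding F by (cases E) auto
  next
    case False
    hence "E = -\<infinity>" using assms(2,3) by (auto simp: E_def exp_log_ratio_def joint_support_def)
    thus ?thesis using K_term unfolding F by (cases "ereal (\<alpha> / (1 - \<alpha>)) * K") auto
  qed
qed

lemma F_C_cases: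
  assumes "1 < \<alpha>" and "\<And>x. 0 \<le> pX x" and "\<And>x y. 0 \<le> q x y"
    and "\<And>x y. 0 \<le> W x y" and "\<And>x y. 0 \<le> r x y"
  obtains (MInfty) "F_C \<alpha> pX W q r = -\<infinity>"
  | (finite) "\<And>x y. (x, y) \<in> joint_support pX q \<Longrightarrow> 0 < W x y \<and> 0 < r x y"
    and "F_C \<alpha> pX W q r = ereal (F_sum \<alpha> pX W q r)"
proof (cases "\<exists>(x, y)\<in>joint_support pX q. W x y = 0 \<or> r x y = 0")
  case True
  thus ?thesis using that(1) F_C_eq_MInfty[OF assms(1)] by blast
next
  case False
  hence pos: "0 < W x y \<and> 0 < r x y" if "(x, y) \<in> joint_support pX q" for x y
    using that assms(4,5)[of x y] by (auto simp: less_eq_real_def)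
  show ?thesis using that(2)[OF pos F_C_eq_F_sum[OF assms(2,3) pos]] by blast
qed

lemma F_sum_le_F_sum_bayes:
  assumes "is_dist pX" and "channel_on pX q" and "sub_reverse_channel r" and "is_dist g"
    and pos: "\<And>x y. (x, y) \<in> joint_support pX q \<Longrightarrow> 0 < r x y \<and> 0 < g y"
  shows "F_sum \<alpha> pX W q r \<le> F_sum \<alpha> pX W q (\<lambda>x y. pX x * q x y / g y)"
proof -
  note pX = is_dist_nonneg[OF assms(1)]
  note q = channel_on_nonneg[OF assms(2)]
  let ?s = "\<lambda>(x, y). pX x * q x y" and ?a = "\<lambda>(x, y). r x y * g y"
  have "F_sum \<alpha> pX W q r = F_sum \<alpha> pX W q (\<lambda>x y. pX x * q x y / g y)
      + (\<Sum>z\<in>joint_support pX q. ?s z * ln (?a z / ?s z))"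
    unfolding F_sum_def sum.distrib[symmetric]
  proof (rule sum.cong[OF refl], clarify)
    fix x y assume xy: "(x, y) \<in> joint_support pX q"
    hence "0 < pX x" "0 < q x y" "0 < r x y" "0 < g y"
      using pos[OF xy] by (auto simp: mem_joint_support pX q)
    hence "ln (r x y / pX x) = ln (pX x * q x y / g y / pX x) + ln (r x y * g y / (pX x * q x y))"
      by (simp add: ln_div ln_mult)
    thus "pX x * q x y * (\<alpha> / (1 - \<alpha>) * ln (q x y / W x y) + ln (r x y / pX x))
        = pX x * q x y * (\<alpha> / (1 - \<alpha>) * ln (q x y / W x y) + ln (pX x * q x y / g y / pX x))
          + pX x * q x y * ln (r x y * g y / (pX x * q x y))"
      by (simp add: algebra_simps)
  qed
  moreover have "(\<Sum>z\<in>joint_support pX q. ?s z * ln (?a z / ?s z)) \<le> ln 1"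
  proof (rule gibbs_inequality)
    show "sum ?s (joint_support pX q) = 1" using joint_mass[OF assms(1,2)] by simp
    show "sum ?a (joint_support pX q) \<le> 1"
      using sum_reverse_times_dist_le_1[OF assms(3,4)] by simp
  qed (use pos in \<open>auto simp: joint_support_def\<close>)
  ultimately show ?thesis by simp
qed

lemma joint_le_output_dist:
  assumes "\<And>x. 0 \<le> pX x" and "\<And>x y. 0 \<le> q x y"
  shows "pX x * q x y \<le> output_dist pX q y"
  unfolding output_dist_def by (rule member_le_sum) (simp_all add: assms)

lemma rev_update_eq_bayes: "rev_update pX q = (\<lambda>x y. pX x * q x y / output_dist pX q y)"
  by (simp add: rev_update_def output_dist_def)

lemma rev_update_pos:
  assumes "\<And>x. 0 \<le> pX x" and "\<And>x y. 0 \<le> q x y" and "0 < pX x * q x y"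
  shows "0 < rev_update pX q x y"
  using joint_le_output_dist[of pX q x y] assms by (simp add: rev_update_eq_bayes)

lemma sub_reverse_channel_rev_update:
  assumes "\<And>x. 0 \<le> pX x" and "\<And>x y. 0 \<le> q x y"
  shows "sub_reverse_channel (rev_update pX q)"
proof -
  have "0 \<le> output_dist pX q y" for y
    unfolding output_dist_def by (simp add: assms sum_nonneg)
  moreover have "(\<Sum>x\<in>UNIV. rev_update pX q x y) = output_dist pX q y / output_dist pX q y" for y
    by (simp add: rev_update_eq_bayes output_dist_def sum_divide_distrib[symmetric])
  ultimately show ?thesis
    by (simp add: sub_reverse_channel_def rev_update_eq_bayes assms divide_le_eq_1)
qed

lemma F_C_le_F_C_rev_update:
  assumes "1 < \<alpha>" and "is_dist pX" and "is_channel W" and "channel_on pX q"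
    and "sub_reverse_channel r"
  shows "F_C \<alpha> pX W q r \<le> F_C \<alpha> pX W q (rev_update pX q)"
proof -
  note pX = is_dist_nonneg[OF assms(2)]
  note W = is_channel_nonneg[OF assms(3)]
  note q = channel_on_nonneg[OF assms(4)]
  note r = sub_reverse_channel_nonneg[OF assms(5)]
  show ?thesis
  proof (rule F_C_cases[OF assms(1) pX q W r])
    assume "F_C \<alpha> pX W q r = -\<infinity>"
    thus ?thesis by simp
  next
    assume pos: "\<And>x y. (x, y) \<in> joint_support pX q \<Longrightarrow> 0 < W x y \<and> 0 < r x y"
      and F_eq: "F_C \<alpha> pX W q r = ereal (F_sum \<alpha> pX W q r)"
    have out_pos: "0 < output_dist pX q y" if "(x, y) \<in> joint_support pX q" for x y
      using that joint_le_output_dist[of pX q x y] pX q by (simp add: joint_support_def)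
    have "F_sum \<alpha> pX W q r \<le> F_sum \<alpha> pX W q (rev_update pX q)"
      unfolding rev_update_eq_bayes
      by (rule F_sum_le_F_sum_bayes)
        (use assms output_dist_is_dist pos out_pos in auto)
    moreover have "F_C \<alpha> pX W q (rev_update pX q) = ereal (F_sum \<alpha> pX W q (rev_update pX q))"
      by (rule F_C_eq_F_sum) (use pX q pos rev_update_pos[of pX q] in \<open>auto simp: joint_support_def\<close>)
    ultimately show ?thesis using F_eq by simp
  qed
qed

lemma sum_mult_powr_pos:
  fixes w r :: "'b::finite \<Rightarrow> real"
  assumes "\<And>y. 0 \<le> w y" and "0 < w y" and "0 < r y"
  shows "0 < (\<Sum>y\<in>UNIV. w y * r y powr b)"
proof -
  have "0 < w y * r y powr b" using assms(2,3) by simp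
  also have "\<dots> \<le> (\<Sum>y\<in>UNIV. w y * r y powr b)"
    by (rule member_le_sum) (simp_all add: assms(1))
  finally show ?thesis .
qed

lemma ch_update_channel_on:
  assumes "\<And>x y. 0 \<le> W x y" and "overlaps pX W r"
  shows "channel_on pX (ch_update \<alpha> W r)"
proof -
  have "sum (ch_update \<alpha> W r x) UNIV = 1" if "0 < pX x" for x
  proof -
    have "0 < (\<Sum>y\<in>UNIV. W x y * r x y powr (1 - 1 / \<alpha>))"
      using assms sum_mult_powr_pos[of "W x"] that by (meson overlaps_def)
    thus ?thesis by (simp add: ch_update_def flip: sum_divide_distrib)
  qed
  thus ?thesis by (simp add: channel_on_def ch_update_def assms sum_nonneg)
qed

lemma overlaps_ch_update:
  assumes "\<And>x y. 0 \<le> W x y" and "overlaps pX W r"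
  shows "overlaps pX W (ch_update \<alpha> W r)"
  unfolding overlaps_def
proof (intro allI impI)
  fix x assume "0 < pX x"
  then obtain y where "0 < W x y" "0 < r x y" using assms(2) by (auto simp: overlaps_def)
  moreover from this have "0 < (\<Sum>y\<in>UNIV. W x y * r x y powr (1 - 1 / \<alpha>))"
    using sum_mult_powr_pos[of "W x"] assms(1) by blast
  ultimately show "\<exists>y. 0 < W x y \<and> 0 < ch_update \<alpha> W r x y"
    by (auto simp: ch_update_def)
qed

lemma ch_update_pos_imp:
  assumes "\<And>x y. 0 \<le> W x y" and "\<And>x y. 0 \<le> r x y" and "0 < ch_update \<alpha> W r x y"
  shows "0 < W x y \<and> 0 < r x y"
proof -
  have "W x y \<noteq> 0" "r x y \<noteq> 0" using assms(3) by (auto simp: ch_update_def)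
  thus ?thesis using assms(1,2)[of x y] by simp
qed

lemma F_input_le_ln_tilted:
  fixes w q r :: "'b::finite \<Rightarrow> real"
  assumes "1 < \<alpha>" and "0 < p" and "\<And>y. 0 \<le> q y" and "sum q UNIV = 1" and "\<And>y. 0 \<le> w y"
    and pos: "\<And>y. 0 < q y \<Longrightarrow> 0 < w y \<and> 0 < r y"
  shows "F_input \<alpha> p w q r
       \<le> \<alpha> / (\<alpha> - 1) * ln (\<Sum>y\<in>UNIV. w y * r y powr (1 - 1 / \<alpha>)) - ln p"
proof -
  let ?a = "\<lambda>y. w y * r y powr (1 - 1 / \<alpha>)"
  have q_supp: "sum q {y. 0 < q y} = 1" using assms(3,4) by (simp add: sum_over_support)
  have "F_input \<alpha> p w q r
      = (\<Sum>y\<in>{y. 0 < q y}. \<alpha> / (\<alpha> - 1) * (q y * ln (?a y / q y)) - q y * ln p)"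
    unfolding F_input_def
  proof (rule sum.cong[OF refl])
    fix y assume "y \<in> {y. 0 < q y}"
    with pos have "0 < q y" "0 < w y" "0 < r y" by auto
    moreover have "ln (r y / p) = ln (r y) - ln p" using \<open>0 < r y\<close> assms(2) by (simp add: ln_div)
    ultimately have summand: "\<alpha> / (1 - \<alpha>) * ln (q y / w y) + ln (r y / p)
        = \<alpha> / (\<alpha> - 1) * ln (?a y / q y) - ln p"
      using ln_tilted_eq[of \<alpha> "q y" "w y" "r y"] assms(1) by simp
    show "q y * (\<alpha> / (1 - \<alpha>) * ln (q y / w y) + ln (r y / p))
        = \<alpha> / (\<alpha> - 1) * (q y * ln (?a y / q y)) - q y * ln p"
      unfolding summand by (simp add: algebra_simps)
  qed
  also have "\<dots> = \<alpha> / (\<alpha> - 1) * (\<Sum>y\<in>{y. 0 < q y}. q y * ln (?a y / q y)) - ln p"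
    by (simp only: sum_subtractf q_supp flip: sum_distrib_left sum_distrib_right)
  also have "\<dots> \<le> \<alpha> / (\<alpha> - 1) * ln (sum ?a UNIV) - ln p"
  proof -
    have "(\<Sum>y\<in>{y. 0 < q y}. q y * ln (?a y / q y)) \<le> ln (sum ?a UNIV)"
      by (rule gibbs_inequality) (use q_supp in \<open>auto intro: sum_mono2 dest: pos simp: assms(5)\<close>)
    moreover have "0 \<le> \<alpha> / (\<alpha> - 1)" using assms(1) by simp
    ultimately have "\<alpha> / (\<alpha> - 1) * (\<Sum>y\<in>{y. 0 < q y}. q y * ln (?a y / q y))
        \<le> \<alpha> / (\<alpha> - 1) * ln (sum ?a UNIV)"
      by (rule mult_left_mono)
    thus ?thesis by linarith
  qed
  finally show ?thesis .
qed

lemma F_input_tilted: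
  fixes w r :: "'b::finite \<Rightarrow> real"
  assumes "1 < \<alpha>" and "0 < p" and "\<And>y. 0 \<le> w y" and "\<And>y. 0 \<le> r y"
    and Z_pos: "0 < (\<Sum>y\<in>UNIV. w y * r y powr (1 - 1 / \<alpha>))"
  shows "F_input \<alpha> p w
           (\<lambda>y. w y * r y powr (1 - 1 / \<alpha>) / (\<Sum>y'\<in>UNIV. w y' * r y' powr (1 - 1 / \<alpha>))) r
       = \<alpha> / (\<alpha> - 1) * ln (\<Sum>y\<in>UNIV. w y * r y powr (1 - 1 / \<alpha>)) - ln p"
proof -
  define Z where "Z = (\<Sum>y\<in>UNIV. w y * r y powr (1 - 1 / \<alpha>))"
  define q where "q y = w y * r y powr (1 - 1 / \<alpha>) / Z" for y
  have q_nonneg: "0 \<le> q y" for y using Z_pos by (simp add: q_def Z_def assms(3))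
  have "sum q UNIV = 1" using Z_pos by (simp add: q_def Z_def flip: sum_divide_distrib)
  hence q_supp: "sum q {y. 0 < q y} = 1" by (simp add: sum_over_support q_nonneg)
  have "F_input \<alpha> p w q r = (\<Sum>y\<in>{y. 0 < q y}. q y * (\<alpha> / (\<alpha> - 1) * ln Z - ln p))"
    unfolding F_input_def
  proof (rule sum.cong[OF refl])
    fix y assume "y \<in> {y. 0 < q y}"
    hence "0 < q y" by simp
    hence "w y \<noteq> 0" "r y \<noteq> 0" by (auto simp: q_def)
    hence wr: "0 < w y" "0 < r y" using assms(3,4)[of y] by auto
    have "w y * r y powr (1 - 1 / \<alpha>) / q y = Z" using wr Z_pos by (simp add: q_def Z_def)
    moreover have "ln (r y / p) = ln (r y) - ln p" using wr assms(2) by (simp add: ln_div)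
    ultimately have "\<alpha> / (1 - \<alpha>) * ln (q y / w y) + ln (r y / p)
        = \<alpha> / (\<alpha> - 1) * ln Z - ln p"
      using ln_tilted_eq[of \<alpha> "q y" "w y" "r y"] \<open>0 < q y\<close> wr assms(1) by simp
    thus "q y * (\<alpha> / (1 - \<alpha>) * ln (q y / w y) + ln (r y / p))
        = q y * (\<alpha> / (\<alpha> - 1) * ln Z - ln p)"
      by simp
  qed
  also have "\<dots> = \<alpha> / (\<alpha> - 1) * ln Z - ln p" by (simp add: q_supp flip: sum_distrib_right)
  finally show ?thesis by (simp add: q_def[abs_def] Z_def)
qed

lemma overlaps_of_joint_support:
  assumes "\<And>x. 0 \<le> pX x" and "channel_on pX q"
    and pos: "\<And>x y. (x, y) \<in> joint_support pX q \<Longrightarrow> 0 < W x y \<and> 0 < r x y"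
  shows "overlaps pX W r"
  unfolding overlaps_def
proof (intro allI impI)
  fix x assume "0 < pX x"
  hence "sum (q x) UNIV \<noteq> 0" using assms(2) by (simp add: channel_on_def)
  then obtain y where "q x y \<noteq> 0" by (meson sum.neutral)
  hence "(x, y) \<in> joint_support pX q"
    using \<open>0 < pX x\<close> assms(1,2) by (simp add: mem_joint_support channel_on_def less_le)
  thus "\<exists>y. 0 < W x y \<and> 0 < r x y" using pos by blast
qed

lemma F_sum_le_F_sum_ch_update:
  assumes "1 < \<alpha>" and "is_dist pX" and "is_channel W" and "channel_on pX q"
    and r: "\<And>x y. 0 \<le> r x y"
    and pos: "\<And>x y. (x, y) \<in> joint_support pX q \<Longrightarrow> 0 < W x y \<and> 0 < r x y"
  shows "F_sum \<alpha> pX W q r \<le> F_sum \<alpha> pX W (ch_update \<alpha> W r) r"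
proof -
  note pX = is_dist_nonneg[OF assms(2)]
  note W = is_channel_nonneg[OF assms(3)]
  note q = channel_on_nonneg[OF assms(4)] and q_sum = channel_on_sum[OF assms(4)]
  have "overlaps pX W r" using overlaps_of_joint_support[OF pX assms(4) pos] .
  hence q': "0 \<le> ch_update \<alpha> W r x y" for x y
    using ch_update_channel_on[of W] W by (simp add: channel_on_def)
  have Z_pos: "0 < (\<Sum>y\<in>UNIV. W x y * r x y powr (1 - 1 / \<alpha>))" if "0 < pX x" for x
    using \<open>overlaps pX W r\<close> that sum_mult_powr_pos[of "W x"] W by (meson overlaps_def)
  show ?thesis
    unfolding F_sum_by_input[of pX q, OF pX q] F_sum_by_input[of pX "ch_update \<alpha> W r", OF pX q']
  proof (rule sum_mono, rule mult_left_mono)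
    fix x assume "x \<in> {x. 0 < pX x}"
    hence x: "0 < pX x" by simp
    have "F_input \<alpha> (pX x) (W x) (q x) (r x)
        \<le> \<alpha> / (\<alpha> - 1) * ln (\<Sum>y\<in>UNIV. W x y * r x y powr (1 - 1 / \<alpha>)) - ln (pX x)"
      by (rule F_input_le_ln_tilted)
        (use assms(1) x q q_sum W pos in \<open>auto simp: mem_joint_support pX q\<close>)
    also have "\<dots> = F_input \<alpha> (pX x) (W x) (ch_update \<alpha> W r x) (r x)"
      unfolding ch_update_def using F_input_tilted[OF assms(1) x W r Z_pos[OF x]] by simp
    finally show "F_input \<alpha> (pX x) (W x) (q x) (r x)
        \<le> F_input \<alpha> (pX x) (W x) (ch_update \<alpha> W r x) (r x)" .
  qed (simp add: pX)
qed

lemma F_C_le_F_C_ch_update: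
  assumes "1 < \<alpha>" and "is_dist pX" and "is_channel W" and "channel_on pX q"
    and r: "\<And>x y. 0 \<le> r x y"
  shows "F_C \<alpha> pX W q r \<le> F_C \<alpha> pX W (ch_update \<alpha> W r) r"
proof -
  note pX = is_dist_nonneg[OF assms(2)]
  note W = is_channel_nonneg[OF assms(3)]
  note q = channel_on_nonneg[OF assms(4)]
  show ?thesis
  proof (rule F_C_cases[OF assms(1) pX q W r])
    assume "F_C \<alpha> pX W q r = -\<infinity>"
    thus ?thesis by simp
  next
    assume pos: "\<And>x y. (x, y) \<in> joint_support pX q \<Longrightarrow> 0 < W x y \<and> 0 < r x y"
      and F_eq: "F_C \<alpha> pX W q r = ereal (F_sum \<alpha> pX W q r)"
    have "overlaps pX W r" using overlaps_of_joint_support[OF pX assms(4) pos] .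
    hence "0 \<le> ch_update \<alpha> W r x y" for x y
      using ch_update_channel_on[of W] W by (simp add: channel_on_def)
    hence "F_C \<alpha> pX W (ch_update \<alpha> W r) r = ereal (F_sum \<alpha> pX W (ch_update \<alpha> W r) r)"
      by (intro F_C_eq_F_sum pX)
        (use ch_update_pos_imp[of W r \<alpha>, OF W r] in \<open>auto simp: mem_joint_support pX\<close>)
    thus ?thesis using F_eq F_sum_le_F_sum_ch_update[OF assms pos] by simp
  qed
qed

lemma F_input_bayes_le_renyi:
  fixes w q t :: "'b::finite \<Rightarrow> real"
  assumes "1 < \<alpha>" and "0 < p" and "\<And>y. 0 \<le> q y" and "sum q UNIV = 1"
    and pos: "\<And>y. 0 < q y \<Longrightarrow> 0 < w y \<and> 0 < t y"
  shows "F_input \<alpha> p w q (\<lambda>y. p * q y / t y)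
       \<le> 1 / (\<alpha> - 1) * ln (\<Sum>z\<in>{z. 0 < w z}. w z powr \<alpha> * t z powr (1 - \<alpha>))"
proof -
  let ?a = "\<lambda>y. w y powr \<alpha> * t y powr (1 - \<alpha>)"
  have q_supp: "sum q {y. 0 < q y} = 1" using assms(3,4) by (simp add: sum_over_support)
  have "F_input \<alpha> p w q (\<lambda>y. p * q y / t y)
      = 1 / (\<alpha> - 1) * (\<Sum>y\<in>{y. 0 < q y}. q y * ln (?a y / q y))"
    unfolding F_input_def sum_distrib_left
  proof (rule sum.cong[OF refl])
    fix y assume "y \<in> {y. 0 < q y}"
    with pos have "0 < q y" "0 < w y" "0 < t y" by auto
    moreover have "p * q y / t y / p = q y / t y" using assms(2) by simp
    ultimately have summand: "\<alpha> / (1 - \<alpha>) * ln (q y / w y) + ln (p * q y / t y / p)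
        = 1 / (\<alpha> - 1) * ln (?a y / q y)"
      using ln_renyi_eq[of \<alpha> "q y" "w y" "t y"] assms(1) by simp
    show "q y * (\<alpha> / (1 - \<alpha>) * ln (q y / w y) + ln (p * q y / t y / p))
        = 1 / (\<alpha> - 1) * (q y * ln (?a y / q y))"
      unfolding summand by simp
  qed
  also have "\<dots> \<le> 1 / (\<alpha> - 1) * ln (\<Sum>z\<in>{z. 0 < w z}. ?a z)"
  proof (rule mult_left_mono)
    show "(\<Sum>y\<in>{y. 0 < q y}. q y * ln (?a y / q y)) \<le> ln (\<Sum>z\<in>{z. 0 < w z}. ?a z)"
      by (rule gibbs_inequality) (use q_supp in \<open>auto intro!: sum_mono2 dest: pos\<close>)
  qed (use assms(1) in simp)
  finally show ?thesis .
qed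

lemma renyi_div_eq_ereal:
  assumes "\<And>z. 0 < p z \<Longrightarrow> q z \<noteq> 0"
  shows "renyi_div \<alpha> p q
       = ereal (1 / (\<alpha> - 1) * ln (\<Sum>z\<in>{z. 0 < p z}. p z powr \<alpha> * q z powr (1 - \<alpha>)))"
  using assms by (auto simp: renyi_div_def)

lemma F_sum_le_renyi_sum:
  assumes "1 < \<alpha>" and "is_dist pX" and "channel_on pX q" and "sub_reverse_channel r"
    and "is_dist qY"
    and pos: "\<And>x y. (x, y) \<in> joint_support pX q \<Longrightarrow> 0 < W x y \<and> 0 < r x y \<and> 0 < qY y"
  shows "F_sum \<alpha> pX W q r \<le> (\<Sum>x\<in>UNIV. pX x *
           (1 / (\<alpha> - 1) * ln (\<Sum>z\<in>{z. 0 < W x z}. W x z powr \<alpha> * qY z powr (1 - \<alpha>))))"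
    (is "_ \<le> (\<Sum>x\<in>UNIV. pX x * ?R x)")
proof -
  note pX = is_dist_nonneg[OF assms(2)]
  note q = channel_on_nonneg[OF assms(3)] and q_sum = channel_on_sum[OF assms(3)]
  have "F_sum \<alpha> pX W q r \<le> F_sum \<alpha> pX W q (\<lambda>x y. pX x * q x y / qY y)"
    by (rule F_sum_le_F_sum_bayes) (use assms pos in auto)
  also have "\<dots> = (\<Sum>x\<in>{x. 0 < pX x}.
      pX x * F_input \<alpha> (pX x) (W x) (q x) (\<lambda>y. pX x * q x y / qY y))"
    by (rule F_sum_by_input[OF pX q])
  also have "\<dots> \<le> (\<Sum>x\<in>{x. 0 < pX x}. pX x * ?R x)"
  proof (rule sum_mono, rule mult_left_mono)
    fix x assume "x \<in> {x. 0 < pX x}"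
    thus "F_input \<alpha> (pX x) (W x) (q x) (\<lambda>y. pX x * q x y / qY y) \<le> ?R x"
      by (intro F_input_bayes_le_renyi)
        (use assms(1) q q_sum pos in \<open>auto simp: mem_joint_support pX q\<close>)
  qed (simp add: pX)
  also have "\<dots> = (\<Sum>x\<in>UNIV. pX x * ?R x)"
    by (rule sum.mono_neutral_left) (auto simp: pX less_le)
  finally show ?thesis .
qed

lemma F_C_le_renyi_sum:
  assumes "1 < \<alpha>" and "is_dist pX" and "is_channel W" and "channel_on pX q"
    and "sub_reverse_channel r" and "is_dist qY"
  shows "F_C \<alpha> pX W q r \<le> (\<Sum>x\<in>UNIV. ereal (pX x) * renyi_div \<alpha> (W x) qY)"
proof -
  note pX = is_dist_nonneg[OF assms(2)]
  note W = is_channel_nonneg[OF assms(3)]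
  note q = channel_on_nonneg[OF assms(4)]
  note r = sub_reverse_channel_nonneg[OF assms(5)]
  note qY = is_dist_nonneg[OF assms(6)]
  show ?thesis
  proof (rule F_C_cases[OF assms(1) pX q W r])
    assume "F_C \<alpha> pX W q r = -\<infinity>"
    thus ?thesis by simp
  next
    assume pos: "\<And>x y. (x, y) \<in> joint_support pX q \<Longrightarrow> 0 < W x y \<and> 0 < r x y"
      and F_eq: "F_C \<alpha> pX W q r = ereal (F_sum \<alpha> pX W q r)"
    show ?thesis
    proof (cases "\<exists>x z. 0 < pX x \<and> 0 < W x z \<and> qY z = 0")
      case True
      then obtain x z where "0 < pX x" "0 < W x z" "qY z = 0" by blast
      hence "ereal (pX x) * renyi_div \<alpha> (W x) qY = \<infinity>" by (auto simp: renyi_div_def)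
      hence "(\<Sum>x\<in>UNIV. ereal (pX x) * renyi_div \<alpha> (W x) qY) = \<infinity>"
        by (intro sum_Pinfty[THEN iffD2]) auto
      thus ?thesis by simp
    next
      case False
      have "ereal (pX x) * renyi_div \<alpha> (W x) qY = ereal (pX x *
          (1 / (\<alpha> - 1) * ln (\<Sum>z\<in>{z. 0 < W x z}. W x z powr \<alpha> * qY z powr (1 - \<alpha>))))" for x
      proof (cases "pX x = 0")
        case False
        hence "0 < pX x" using pX[of x] by simp
        thus ?thesis using \<open>\<nexists>x z. 0 < pX x \<and> 0 < W x z \<and> qY z = 0\<close>
          by (simp add: renyi_div_eq_ereal)
      qed (simp add: zero_ereal_def[symmetric])
      moreover have "0 < qY y" if "(x, y) \<in> joint_support pX q" for x y
        using False pos[OF that] that qY[of y] by (auto simp: mem_joint_support pX q less_le)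
      hence "F_sum \<alpha> pX W q r \<le> (\<Sum>x\<in>UNIV. pX x *
          (1 / (\<alpha> - 1) * ln (\<Sum>z\<in>{z. 0 < W x z}. W x z powr \<alpha> * qY z powr (1 - \<alpha>))))"
        by (intro F_sum_le_renyi_sum) (use assms pos in auto)
      ultimately show ?thesis using F_eq by simp
    qed
  qed
qed

lemma F_C_le_augustin_csiszar_MI:
  assumes "1 < \<alpha>" and "is_dist pX" and "is_channel W" and "channel_on pX q"
    and "sub_reverse_channel r"
  shows "F_C \<alpha> pX W q r \<le> augustin_csiszar_MI \<alpha> pX W"
  unfolding augustin_csiszar_MI_def
  by (rule INF_greatest) (use F_C_le_renyi_sum[OF assms] in simp)

lemma overlaps_rev_update:
  assumes "\<And>x. 0 \<le> pX x" and "\<And>x y. 0 \<le> q x y" and "overlaps pX W q"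
  shows "overlaps pX W (rev_update pX q)"
  unfolding overlaps_def
proof (intro allI impI)
  fix x assume "0 < pX x"
  then obtain y where "0 < W x y" "0 < q x y" using assms(3) by (auto simp: overlaps_def)
  moreover from this have "0 < rev_update pX q x y"
    using \<open>0 < pX x\<close> by (intro rev_update_pos assms(1,2)) simp
  ultimately show "\<exists>y. 0 < W x y \<and> 0 < rev_update pX q x y" by blast
qed

lemma q_iter_channel_on_overlaps:
  assumes "is_dist pX" and "is_channel W" and "is_channel q0" and "overlaps pX W q0"
  shows "channel_on pX (q_iter \<alpha> pX W q0 k) \<and> overlaps pX W (q_iter \<alpha> pX W q0 k)"
proof (induction k)
  case 0
  show ?case using assms(3,4) by (simp add: channel_on_def is_channel_def is_dist_def)
next
  case (Suc k)
  note pX = is_dist_nonneg[OF assms(1)]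
  note W = is_channel_nonneg[OF assms(2)]
  have "overlaps pX W (rev_update pX (q_iter \<alpha> pX W q0 k))"
    using Suc.IH by (intro overlaps_rev_update) (auto simp: pX channel_on_def)
  thus ?case by (simp add: ch_update_channel_on overlaps_ch_update W)
qed

theorem lemma3:
  fixes \<alpha> :: real and pX :: "'a::finite \<Rightarrow> real" and W q0 :: "'a \<Rightarrow> 'b::finite \<Rightarrow> real"
  assumes "1 < \<alpha>"
    and "is_dist pX"
    and "is_channel W"
    and "is_channel q0"
    and "\<And>x. 0 < pX x \<Longrightarrow> \<exists>y. 0 < W x y \<and> 0 < q0 x y"
  shows "\<forall>k. F_C \<alpha> pX W (q_iter \<alpha> pX W q0 k) (r_iter \<alpha> pX W q0 k)
              \<le> F_C \<alpha> pX W (q_iter \<alpha> pX W q0 (Suc k)) (r_iter \<alpha> pX W q0 k)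
           \<and> F_C \<alpha> pX W (q_iter \<alpha> pX W q0 (Suc k)) (r_iter \<alpha> pX W q0 k)
              \<le> F_C \<alpha> pX W (q_iter \<alpha> pX W q0 (Suc k)) (r_iter \<alpha> pX W q0 (Suc k))
           \<and> F_C \<alpha> pX W (q_iter \<alpha> pX W q0 k) (r_iter \<alpha> pX W q0 k)
              \<le> augustin_csiszar_MI \<alpha> pX W
           \<and> F_C \<alpha> pX W (q_iter \<alpha> pX W q0 (Suc k)) (r_iter \<alpha> pX W q0 k)
              \<le> augustin_csiszar_MI \<alpha> pX W"
proof (intro allI conjI)
  fix k
  have "overlaps pX W q0" using assms(5) by (simp add: overlaps_def)
  hence channel: "channel_on pX (q_iter \<alpha> pX W q0 j)" for j
    using q_iter_channel_on_overlaps[OF assms(2-4)] by blast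
  have r_k: "sub_reverse_channel (r_iter \<alpha> pX W q0 k)"
    unfolding r_iter_def
    by (rule sub_reverse_channel_rev_update[OF is_dist_nonneg[OF assms(2)] channel_on_nonneg[OF channel]])
  have q_Suc: "q_iter \<alpha> pX W q0 (Suc k) = ch_update \<alpha> W (r_iter \<alpha> pX W q0 k)"
    by (simp add: r_iter_def)
  show "F_C \<alpha> pX W (q_iter \<alpha> pX W q0 k) (r_iter \<alpha> pX W q0 k)
      \<le> F_C \<alpha> pX W (q_iter \<alpha> pX W q0 (Suc k)) (r_iter \<alpha> pX W q0 k)"
    unfolding q_Suc
    by (rule F_C_le_F_C_ch_update[OF assms(1-3) channel sub_reverse_channel_nonneg[OF r_k]])
  show "F_C \<alpha> pX W (q_iter \<alpha> pX W q0 (Suc k)) (r_iter \<alpha> pX W q0 k)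
      \<le> F_C \<alpha> pX W (q_iter \<alpha> pX W q0 (Suc k)) (r_iter \<alpha> pX W q0 (Suc k))"
    unfolding r_iter_def[of _ _ _ _ "Suc k"]
    by (rule F_C_le_F_C_rev_update[OF assms(1-3) channel r_k])
  show "F_C \<alpha> pX W (q_iter \<alpha> pX W q0 k) (r_iter \<alpha> pX W q0 k) \<le> augustin_csiszar_MI \<alpha> pX W"
    and "F_C \<alpha> pX W (q_iter \<alpha> pX W q0 (Suc k)) (r_iter \<alpha> pX W q0 k) \<le> augustin_csiszar_MI \<alpha> pX W"
    by (rule F_C_le_augustin_csiszar_MI[OF assms(1-3) channel r_k])+
qed

end
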